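(* Let $N,L\in\mathbb Z_{>0}$, $p_{\mathrm c},p_{\mathrm s},\alpha_{\mathrm s}>0$, $\mathbf h_{\mathrm c},\mathbf h_{\mathrm s}\in\mathbb C^N$ with $\mathbf h_{\mathrm s}\neq\mathbf 0$, $\mathbf w=\mathbf h_{\mathrm s}^*/\|\mathbf h_{\mathrm s}\|$, and $\mathbf s_{\mathrm s}\in\mathbb C^L$ deterministic with $L^{-1}\|\mathbf s_{\mathrm s}\|^2=1$. The base station observes $\mathbf Y=\sqrt{p_{\mathrm c}}\mathbf h_{\mathrm c}\mathbf s_{\mathrm c}^{\mathsf H}+\sqrt{p_{\mathrm s}}\beta\mathbf h_{\mathrm s}\mathbf h_{\mathrm s}^{\mathsf T}\mathbf w\mathbf s_{\mathrm s}^{\mathsf H}+\mathbf N_{\mathrm u}$, with $\beta\sim\mathcal{CN}(0,\alpha_{\mathrm s})$. In the communications-centric design the interference-plus-noise $\mathbf z_{\mathrm c}=\mathrm{vec}(\sqrt{p_{\mathrm c}}\mathbf h_{\mathrm c}\mathbf s_{\mathrm c}^{\mathsf H}+\mathbf N_{\mathrm u})$ is treated as circularly-symmetric Gaussian $\mathcal{CN}(\mathbf 0,\mathbf I_L\otimes(p_{\mathrm c}\mathbf h_{\mathrm c}\mathbf h_{\mathrm c}^{\mathsf H}+\mathbf I_N))$ independent of $\beta$, and the sensing rate is $\mathcal R^{\mathrm c}_{\mathrm{c,s}}=\frac1L I(\mathrm{vec}(\mathbf Y);\beta)$ computed under this model. Then $$\mathcal R^{\mathrm c}_{\mathrm{c,s}}=\frac1L\log_2\!\Big[1+p_{\mathrm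 s}L\alpha_{\mathrm s}\|\mathbf h_{\mathrm s}\|^2\Big(\|\mathbf h_{\mathrm s}\|^2-\frac{p_{\mathrm c}|\mathbf h_{\mathrm s}^{\mathsf H}\mathbf h_{\mathrm c}|^2}{1+p_{\mathrm c}\|\mathbf h_{\mathrm c}\|^2}\Big)\Big].$$
   Context: $\mathrm{vec}(\cdot)$ stacks columns; $\otimes$ is the Kronecker product; $\mathcal{CN}$ denotes the circularly-symmetric complex Gaussian distribution; mutual information is in bits. *)

theory Defs
  imports "HOL-Analysis.Analysis" "HOL-Probability.Probability"
begin

definition herm_form :: "complex^'k \<Rightarrow> complex^'k^'k \<Rightarrow> complex" where
  "herm_form x A = (\<Sum>i\<in>UNIV. \<Sum>j\<in>UNIV. cnj (x$i) * (A$i$j) * (x$j))"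

text \<open>Density (w.r.t. Lebesgue measure on C^k = R^(2k)) of the circularly-symmetric
  complex Gaussian CN(0, Sigma) with positive definite covariance Sigma.\<close>
definition cn_density :: "complex^'k^'k \<Rightarrow> complex^'k \<Rightarrow> real" where
  "cn_density S x = exp (- Re (herm_form x (matrix_inv S))) / (pi ^ CARD('k) * Re (det S))"

definition cn1_density :: "real \<Rightarrow> complex \<Rightarrow> real" where
  "cn1_density a x = exp (- (cmod x)\<^sup>2 / a) / (pi * a)"

text \<open>Column-stacking vec of an N x L matrix (rows indexed by 'n, columns by 'l);
  the entry (j,i) of vec Y is Y_{i,j}.\<close>
definition cvec :: "complex^'l::finite^'n::finite \<Rightarrow> complex^('l \<times> 'n)" where
  "cvec Y = (\<chi> p. Y$(snd p)$(fst p))"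

text \<open>Kronecker product I_L \<otimes> C, indexed compatibly with cvec.\<close>
definition kron_eye :: "complex^'n::finite^'n \<Rightarrow> complex^('l::finite \<times> 'n)^('l \<times> 'n)" where
  "kron_eye C = (\<chi> p q. if fst p = fst q then C$(snd p)$(snd q) else 0)"

definition outerH :: "complex^'n \<Rightarrow> complex^'l \<Rightarrow> complex^'l^'n" where
  "outerH a b = (\<chi> i j. a$i * cnj (b$j))"

end

theory Submission
  imports Defs
begin

text \<open>With \<open>c = \<surd>ps vec G\<close> the observation is \<open>Y = \<beta> c + z\<close>, a scalar complex Gaussian
  channel. The noise density is \<open>exp (- Re (x\<^sup>H B x)) / D\<close> with
  \<open>B = (I\<^sub>L \<otimes> (I + pc hc hc\<^sup>H))\<^sup>-\<^sup>1\<close>, and shifting \<open>x\<close> by \<open>b c\<close> changes the exponent by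
  \<open>2 Re (b\<^sup>* c\<^sup>H B x) + \<bar>b\<bar>\<^sup>2 \<gamma>\<close>, where \<open>\<gamma> = c\<^sup>H B c\<close>. Completing the square in \<open>\<beta>\<close> gives the
  output density; the information density is then \<open>log\<^sub>2 (1 + \<alpha> \<gamma>)\<close> plus a quadratic form in
  \<open>\<beta>\<close> and \<open>c\<^sup>H B z\<close> whose mean vanishes. The moments this needs follow from translation
  invariance of Lebesgue measure, which turns each Gaussian density into a moment generating
  function \<open>exp (t\<^sup>2 \<sigma>\<^sup>2 / 2)\<close>. Finally \<open>\<gamma>\<close> is evaluated with the Sherman--Morrison formula.\<close>

section \<open>Moments from a Gaussian moment generating function\<close>

lemma cosh_minus_quadratic_sums:
  fixes x :: real
  shows "(\<lambda>n. if even n then x ^ (n + 4) / fact (n + 4) else 0) sums (cosh x - 1 - x\<^sup>2 / 2)"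
proof -
  define c where "c = (\<lambda>n. if even n then x ^ n / fact n else 0)"
  have "c sums cosh x"
    using cosh_converges[of x] by (simp add: c_def divide_inverse mult.commute cong: if_cong)
  then have "(\<lambda>n. c (n + 4)) sums (cosh x - (\<Sum>i<4. c i))"
    by (subst sums_iff_shift')
  moreover have "(\<Sum>i<4. c i) = 1 + x\<^sup>2 / 2"
    by (simp add: c_def lessThan_nat_numeral)
  ultimately show ?thesis
    by (simp add: c_def diff_diff_eq)
qed

lemma one_plus_sq_half_le_cosh: "1 + x\<^sup>2 / 2 \<le> cosh (x :: real)"
proof -
  have "0 \<le> cosh x - 1 - x\<^sup>2 / 2"
    by (rule sums_le[OF _ sums_zero cosh_minus_quadratic_sums]) (simp add: zero_le_even_power)
  then show ?thesis by simp
qed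

lemma cosh_scaled_le:
  fixes s y :: real
  assumes "0 \<le> s" "s \<le> 1"
  shows "cosh (s * y) \<le> 1 + (s * y)\<^sup>2 / 2 + s ^ 4 * cosh y"
proof -
  have "(if even n then (s * y) ^ (n + 4) / fact (n + 4) else 0)
      \<le> s ^ 4 * (if even n then y ^ (n + 4) / fact (n + 4) else 0)" for n
  proof (cases "even n")
    case True
    have "s ^ (n + 4) * (y ^ (n + 4) / fact (n + 4)) \<le> s ^ 4 * (y ^ (n + 4) / fact (n + 4))"
      using assms True by (intro mult_right_mono power_decreasing) (auto simp: zero_le_even_power)
    then show ?thesis
      using True by (simp add: power_mult_distrib)
  qed simp
  then have "cosh (s * y) - 1 - (s * y)\<^sup>2 / 2 \<le> s ^ 4 * (cosh y - 1 - y\<^sup>2 / 2)"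
    by (rule sums_le[OF _ cosh_minus_quadratic_sums sums_mult[OF cosh_minus_quadratic_sums]])
  also have "\<dots> \<le> s ^ 4 * cosh y"
  proof (rule mult_left_mono)
    show "cosh y - 1 - y\<^sup>2 / 2 \<le> cosh y"
      using zero_le_power2[of y] by linarith
  qed (use assms in simp)
  finally show ?thesis by simp
qed

lemma derivative_eq_of_right_squeeze:
  fixes f :: "real \<Rightarrow> real"
  assumes deriv: "(f has_real_derivative l) (at 0)" and "0 < d"
    and lower: "\<And>u. 0 < u \<Longrightarrow> u < d \<Longrightarrow> f 0 + a * u \<le> f u"
    and upper: "\<And>u. 0 < u \<Longrightarrow> u < d \<Longrightarrow> f u \<le> f 0 + a * u + C * u\<^sup>2"
  shows "l = a"
proof (rule linorder_cases[of l a])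
  assume "l < a"
  have "((\<lambda>u. f u - a * u) has_real_derivative l - a) (at 0)"
    using deriv by (auto intro!: derivative_eq_intros)
  from DERIV_neg_dec_right[OF this] \<open>l < a\<close> obtain e where "0 < e"
    and e: "\<And>h. 0 < h \<Longrightarrow> h < e \<Longrightarrow> f h - a * h < f 0"
    by auto
  define h where "h = min d e / 2"
  have "0 < h" "h < d" "h < e" using \<open>0 < d\<close> \<open>0 < e\<close> by (auto simp: h_def)
  then show ?thesis using lower[of h] e[of h] by simp
next
  assume "a < l"
  have "((\<lambda>u. f u - a * u - C * u\<^sup>2) has_real_derivative l - a) (at 0)"
    using deriv by (auto intro!: derivative_eq_intros)
  from DERIV_pos_inc_right[OF this] \<open>a < l\<close> obtain e where "0 < e"
    and e: "\<And>h. 0 < h \<Longrightarrow> h < e \<Longrightarrow> f 0 < f h - a * h - C * h\<^sup>2"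
    by auto
  define h where "h = min d e / 2"
  have "0 < h" "h < d" "h < e" using \<open>0 < d\<close> \<open>0 < e\<close> by (auto simp: h_def)
  then show ?thesis using upper[of h] e[of h] by simp
qed

locale gaussian_mgf = prob_space +
  fixes W :: "'a \<Rightarrow> real" and \<sigma>2 :: real
  assumes random_variable_W[measurable]: "W \<in> borel_measurable M"
    and mgf: "\<And>t. (\<integral>\<^sup>+x. ennreal (exp (t * W x)) \<partial>M) = ennreal (exp (t\<^sup>2 * \<sigma>2 / 2))"
begin

lemma has_bochner_integral_exp: "has_bochner_integral M (\<lambda>x. exp (t * W x)) (exp (t\<^sup>2 * \<sigma>2 / 2))"
  by (rule has_bochner_integral_nn_integral) (auto simp: mgf)

lemma has_bochner_integral_cosh: "has_bochner_integral M (\<lambda>x. cosh (t * W x)) (exp (t\<^sup>2 * \<sigma>2 / 2))"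
  using has_bochner_integral_divide_zero[OF has_bochner_integral_add[OF
      has_bochner_integral_exp[of t] has_bochner_integral_exp[of "-t"]], of 2]
  by (simp add: cosh_def)

lemma integrable_W: "integrable M W"
  and integrable_W_sq: "integrable M (\<lambda>x. (W x)\<^sup>2)"
proof -
  have cosh: "integrable M (\<lambda>x. cosh (W x))"
    using has_bochner_integral_cosh[of 1] by (simp add: has_bochner_integral_iff)
  have "norm y \<le> norm (cosh y)" and "norm (y\<^sup>2) \<le> norm (2 * cosh y)" for y :: real
  proof -
    have "\<bar>y\<bar> \<le> 1 + y\<^sup>2 / 2"
      using zero_le_power2[of "\<bar>y\<bar> - 1"] by (simp add: power2_eq_square algebra_simps)
    then show "norm y \<le> norm (cosh y)" "norm (y\<^sup>2) \<le> norm (2 * cosh y)"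
      using one_plus_sq_half_le_cosh[of y] by auto
  qed
  then show "integrable M W" "integrable M (\<lambda>x. (W x)\<^sup>2)"
    by (auto intro: Bochner_Integration.integrable_bound[OF cosh]
        Bochner_Integration.integrable_bound[OF integrable_mult_right[OF cosh, of 2]])
qed

lemma expectation_W: "expectation W = 0"
proof -
  define \<phi> where "\<phi> t = exp (t\<^sup>2 * \<sigma>2 / 2) - t * expectation W" for t
  have min: "\<phi> 0 \<le> \<phi> t" for t
  proof -
    have "expectation (\<lambda>x. 1 + t * W x) \<le> expectation (\<lambda>x. exp (t * W x))"
      using has_bochner_integral_exp[of t] integrable_W
      by (intro integral_mono) (auto simp: has_bochner_integral_iff exp_ge_add_one_self)
    then show ?thesis
      using has_bochner_integral_exp[of t] integrable_W
      by (simp add: \<phi>_def has_bochner_integral_iff prob_space)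
  qed
  have "(\<phi> has_real_derivative - expectation W) (at 0)"
    unfolding \<phi>_def[abs_def] by (auto intro!: derivative_eq_intros)
  from DERIV_local_min[OF this zero_less_one] min have "- expectation W = 0"
    by blast
  then show ?thesis by simp
qed

lemma expectation_W_sq: "expectation (\<lambda>x. (W x)\<^sup>2) = \<sigma>2"
proof -
  define E2 where "E2 = expectation (\<lambda>x. (W x)\<^sup>2)"
  txt \<open>\<open>E cosh (\<surd>u W) = exp (u \<sigma>2 / 2)\<close> lies between \<open>1 + u E2 / 2\<close> and that plus
    \<open>O(u\<^sup>2)\<close>, so comparing derivatives at \<open>u = 0\<close> gives \<open>E2 = \<sigma>2\<close>.\<close>
  have bounds: "1 + E2 / 2 * u \<le> exp (u * (\<sigma>2 / 2))"
    "exp (u * (\<sigma>2 / 2)) \<le> 1 + E2 / 2 * u + exp (\<sigma>2 / 2) * u\<^sup>2"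
    if "0 < u" "u < 1" for u
  proof -
    define s where "s = sqrt u"
    have s: "0 \<le> s" "s \<le> 1" "s\<^sup>2 = u" "s ^ 4 = u\<^sup>2"
      using that by (auto simp: s_def power4_eq_xxxx power2_eq_square real_sqrt_le_1_iff)
    have cosh_s: "expectation (\<lambda>x. cosh (s * W x)) = exp (u * (\<sigma>2 / 2))"
      using has_bochner_integral_cosh[of s] s by (simp add: has_bochner_integral_iff)
    have "expectation (\<lambda>x. 1 + u / 2 * (W x)\<^sup>2) \<le> expectation (\<lambda>x. cosh (s * W x))"
      using has_bochner_integral_cosh[of s] integrable_W_sq one_plus_sq_half_le_cosh[of "s * W _"] s
      by (intro integral_mono) (auto simp: has_bochner_integral_iff power_mult_distrib)
    then show "1 + E2 / 2 * u \<le> exp (u * (\<sigma>2 / 2))"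
      using integrable_W_sq by (simp add: cosh_s E2_def prob_space mult_ac)
    have "expectation (\<lambda>x. cosh (s * W x))
        \<le> expectation (\<lambda>x. 1 + u / 2 * (W x)\<^sup>2 + u\<^sup>2 * cosh (1 * W x))"
      using has_bochner_integral_cosh[of s] has_bochner_integral_cosh[of 1] integrable_W_sq
        cosh_scaled_le[OF s(1,2), of "W _"] s
      by (intro integral_mono) (auto simp: has_bochner_integral_iff power_mult_distrib)
    then show "exp (u * (\<sigma>2 / 2)) \<le> 1 + E2 / 2 * u + exp (\<sigma>2 / 2) * u\<^sup>2"
      using has_bochner_integral_cosh[of 1] integrable_W_sq
      by (simp add: cosh_s E2_def prob_space has_bochner_integral_iff mult_ac)
  qed
  have "((\<lambda>u. exp (u * (\<sigma>2 / 2))) has_real_derivative \<sigma>2 / 2) (at 0)"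
    by (auto intro!: derivative_eq_intros)
  then have "\<sigma>2 / 2 = E2 / 2"
    by (rule derivative_eq_of_right_squeeze[OF _ zero_less_one, where C = "exp (\<sigma>2 / 2)"])
      (use bounds in simp_all)
  then show ?thesis by (simp add: E2_def)
qed

end

section \<open>Gaussian densities on Euclidean space\<close>

lemma nn_integral_lborel_translate:
  fixes f :: "'a::euclidean_space \<Rightarrow> ennreal"
  assumes [measurable]: "f \<in> borel_measurable borel"
  shows "(\<integral>\<^sup>+x. f (c + x) \<partial>lborel) = (\<integral>\<^sup>+x. f x \<partial>lborel)"
proof -
  have "(\<integral>\<^sup>+x. f (c + x) \<partial>lborel) = (\<integral>\<^sup>+x. f x \<partial>distr lborel borel ((+) c))"
    by (subst nn_integral_distr) auto
  then show ?thesis by (simp add: lborel_distr_plus)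
qed

lemma (in prob_space) distributed_scaled_density:
  assumes X: "distributed M S X (\<lambda>x. ennreal (h x / D))" and h_pos: "\<And>x. 0 < h x"
  shows "0 < D" and "(\<integral>\<^sup>+x. ennreal (h x / D) \<partial>S) = 1"
proof -
  have "prob_space (distr M S X)"
    using X by (intro prob_space_distr) (simp add: distributed_def)
  then have "emeasure (distr M S X) (space S) = 1"
    by (metis prob_space.emeasure_space_1 space_distr)
  then show total: "(\<integral>\<^sup>+x. ennreal (h x / D) \<partial>S) = 1"
    using X by (simp add: distributed_def emeasure_density)
  show "0 < D"
  proof (rule ccontr)
    assume "\<not> 0 < D"
    then have "h x / D \<le> 0" for x
      using h_pos[of x] by (intro divide_nonneg_nonpos) auto
    then show False
      using total by (simp add: ennreal_neg)
  qed
qed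

text \<open>Translation invariance of Lebesgue measure turns a shift identity for the exponent
  of a Gaussian density into its moment generating function along the shift direction.\<close>

lemma (in prob_space) gaussian_mgf_of_shifted_density:
  fixes X :: "'a \<Rightarrow> 'b::euclidean_space" and q m :: "'b \<Rightarrow> real"
  assumes X: "distributed M lborel X (\<lambda>x. ennreal (exp (- q x) / D))"
    and [measurable]: "q \<in> borel_measurable borel" "m \<in> borel_measurable borel"
    and shift: "\<And>x s. q (x + s *\<^sub>R d) = q x + 2 * s * m x + s\<^sup>2 * g"
  shows "gaussian_mgf M (\<lambda>\<omega>. m (X \<omega>)) (g / 2)"
proof
  have [measurable]: "X \<in> measurable M borel"
    using X by (simp add: distributed_def)
  show "(\<lambda>\<omega>. m (X \<omega>)) \<in> borel_measurable M" by measurable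
  have D: "0 < D" and total: "(\<integral>\<^sup>+x. ennreal (exp (- q x) / D) \<partial>lborel) = 1"
    using distributed_scaled_density[OF X] by auto
  fix t :: real
  let ?I = "\<integral>\<^sup>+x. ennreal (exp (- q x) / D * exp (t * m x)) \<partial>lborel"
  define k where "k = t\<^sup>2 * (g / 2) / 2"
  have "ennreal (exp (- q ((- t / 2) *\<^sub>R d + x)) / D)
      = ennreal (exp (- k)) * ennreal (exp (- q x) / D * exp (t * m x))" for x
  proof -
    have "q ((- t / 2) *\<^sub>R d + x) = q x - t * m x + k"
      using shift[of x "- t / 2"] by (simp add: k_def add.commute power2_eq_square)
    then show ?thesis
      using D
      by (simp add: ennreal_mult[symmetric] exp_add[symmetric] exp_diff exp_minus field_simps)
  qed
  then have shifted_total: "1 = ennreal (exp (- k)) * ?I"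
    using nn_integral_lborel_translate[of "\<lambda>x. ennreal (exp (- q x) / D)" "(- t / 2) *\<^sub>R d"] total
    by (simp add: nn_integral_cmult)
  have "ennreal (exp k) = ennreal (exp k) * (ennreal (exp (- k)) * ?I)"
    by (metis shifted_total mult_1_right)
  also have "\<dots> = ?I"
    by (simp add: mult.assoc[symmetric] ennreal_mult[symmetric] exp_minus)
  finally have I: "?I = ennreal (exp k)" ..
  have "(\<integral>\<^sup>+\<omega>. ennreal (exp (t * m (X \<omega>))) \<partial>M)
      = (\<integral>\<^sup>+x. ennreal (exp (- q x) / D) * ennreal (exp (t * m x)) \<partial>lborel)"
    by (rule distributed_nn_integral[OF X, symmetric]) simp
  also have "\<dots> = ?I"
    using D by (intro nn_integral_cong) (simp add: ennreal_mult[symmetric])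
  finally show "(\<integral>\<^sup>+\<omega>. ennreal (exp (t * m (X \<omega>))) \<partial>M) = ennreal (exp (t\<^sup>2 * (g / 2) / 2))"
    using I by (simp add: k_def)
qed

lemma (in prob_space) complex_gaussian_moments:
  fixes X :: "'a \<Rightarrow> 'b::euclidean_space" and q :: "'b \<Rightarrow> real" and \<mu> :: "'b \<Rightarrow> complex"
  assumes X: "distributed M lborel X (\<lambda>x. ennreal (exp (- q x) / D))"
    and [measurable]: "q \<in> borel_measurable borel" "\<mu> \<in> borel_measurable borel"
    and shift_Re: "\<And>x s. q (x + s *\<^sub>R d\<^sub>1) = q x + 2 * s * Re (\<mu> x) + s\<^sup>2 * g"
    and shift_Im: "\<And>x s. q (x + s *\<^sub>R d\<^sub>2) = q x + 2 * s * Im (\<mu> x) + s\<^sup>2 * g"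
  shows "integrable M (\<lambda>\<omega>. \<mu> (X \<omega>))" and "expectation (\<lambda>\<omega>. \<mu> (X \<omega>)) = 0"
    and "integrable M (\<lambda>\<omega>. (cmod (\<mu> (X \<omega>)))\<^sup>2)"
    and "expectation (\<lambda>\<omega>. (cmod (\<mu> (X \<omega>)))\<^sup>2) = g"
proof -
  interpret Re: gaussian_mgf M "\<lambda>\<omega>. Re (\<mu> (X \<omega>))" "g / 2"
    by (rule gaussian_mgf_of_shifted_density[OF X _ _ shift_Re]) measurable
  interpret Im: gaussian_mgf M "\<lambda>\<omega>. Im (\<mu> (X \<omega>))" "g / 2"
    by (rule gaussian_mgf_of_shifted_density[OF X _ _ shift_Im]) measurable
  have [measurable]: "X \<in> measurable M borel"
    using X by (simp add: distributed_def)
  show int: "integrable M (\<lambda>\<omega>. \<mu> (X \<omega>))"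
    by (rule Bochner_Integration.integrable_bound[where f="\<lambda>\<omega>. \<bar>Re (\<mu> (X \<omega>))\<bar> + \<bar>Im (\<mu> (X \<omega>))\<bar>"])
      (auto intro!: Bochner_Integration.integrable_add integrable_abs
        Re.integrable_W Im.integrable_W simp: cmod_le)
  show "expectation (\<lambda>\<omega>. \<mu> (X \<omega>)) = 0"
    using Re.expectation_W Im.expectation_W int by (simp add: complex_eq_iff)
  show "integrable M (\<lambda>\<omega>. (cmod (\<mu> (X \<omega>)))\<^sup>2)"
    using Re.integrable_W_sq Im.integrable_W_sq by (simp add: cmod_power2)
  show "expectation (\<lambda>\<omega>. (cmod (\<mu> (X \<omega>)))\<^sup>2) = g"
    using Re.integrable_W_sq Im.integrable_W_sq Re.expectation_W_sq Im.expectation_W_sq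
    by (simp add: cmod_power2)
qed

text \<open>The library does not identify Lebesgue measure on \<open>\<complex>\<close> with the product measure on
  \<open>\<real>\<^sup>2\<close>, so the Gaussian normalising constant is transported by scaling from a known one.\<close>

lemma nn_integral_complex_gaussian_rescale:
  fixes \<alpha> a :: real
  assumes "0 < \<alpha>" "0 < a"
    and normalised: "(\<integral>\<^sup>+b. ennreal (exp (- (cmod b)\<^sup>2 / \<alpha>)) \<partial>lborel) = ennreal (pi * \<alpha>)"
  shows "(\<integral>\<^sup>+b. ennreal (exp (- (cmod b)\<^sup>2 / a)) \<partial>lborel) = ennreal (pi * a)"
proof -
  define l where "l = sqrt (a / \<alpha>)"
  have l: "0 < l" "l\<^sup>2 = a / \<alpha>"
    using assms by (auto simp: l_def)
  have "(\<integral>\<^sup>+b. ennreal (exp (- (cmod b)\<^sup>2 / a)) \<partial>lborel)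
      = (\<integral>\<^sup>+b. ennreal (exp (- (cmod b)\<^sup>2 / a))
           \<partial>density (distr lborel borel (\<lambda>x. 0 + l *\<^sub>R x)) (\<lambda>_. \<bar>l\<bar> ^ DIM(complex)))"
    using lborel_affine[of l "0::complex"] l by simp
  also have "\<dots> = (\<integral>\<^sup>+b. ennreal (l\<^sup>2) * ennreal (exp (- (cmod b)\<^sup>2 / \<alpha>)) \<partial>lborel)"
  proof -
    have "l\<^sup>2 * (cmod b)\<^sup>2 / a = (cmod b)\<^sup>2 / \<alpha>" for b
      using l assms by (simp add: field_simps)
    then show ?thesis
      using l by (simp add: nn_integral_density nn_integral_distr power_mult_distrib)
  qed
  also have "\<dots> = ennreal (l\<^sup>2) * ennreal (pi * \<alpha>)"
    by (subst nn_integral_cmult) (measurable, simp only: normalised)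
  also have "\<dots> = ennreal (pi * a)"
    using l assms by (simp add: ennreal_mult[symmetric] field_simps)
  finally show ?thesis .
qed

text \<open>Completing the square in the exponent.\<close>

lemma nn_integral_complex_gaussian_tilt:
  fixes \<alpha> a :: real and t :: complex
  assumes "0 < \<alpha>" "0 < a"
    and normalised: "(\<integral>\<^sup>+b. ennreal (exp (- (cmod b)\<^sup>2 / \<alpha>)) \<partial>lborel) = ennreal (pi * \<alpha>)"
  shows "(\<integral>\<^sup>+b. ennreal (exp (2 * Re (cnj b * t) - (cmod b)\<^sup>2 / a)) \<partial>lborel)
    = ennreal (pi * a * exp (a * (cmod t)\<^sup>2))"
proof -
  have "2 * Re (cnj b * t) - (cmod b)\<^sup>2 / a = a * (cmod t)\<^sup>2 - (cmod (- (of_real a * t) + b))\<^sup>2 / a"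
    for b
    unfolding cmod_power2 using assms by (simp add: field_simps power2_eq_square)
  then have "exp (2 * Re (cnj b * t) - (cmod b)\<^sup>2 / a)
      = exp (a * (cmod t)\<^sup>2) * exp (- (cmod (- (of_real a * t) + b))\<^sup>2 / a)" for b
    by (simp add: exp_add[symmetric])
  then have "(\<integral>\<^sup>+b. ennreal (exp (2 * Re (cnj b * t) - (cmod b)\<^sup>2 / a)) \<partial>lborel)
      = ennreal (exp (a * (cmod t)\<^sup>2))
        * (\<integral>\<^sup>+b. ennreal (exp (- (cmod (- (of_real a * t) + b))\<^sup>2 / a)) \<partial>lborel)"
    by (simp add: ennreal_mult nn_integral_cmult)
  also have "\<dots> = ennreal (exp (a * (cmod t)\<^sup>2)) * ennreal (pi * a)"
    using nn_integral_lborel_translate[where f = "\<lambda>b. ennreal (exp (- (cmod b)\<^sup>2 / a))"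
        and c = "- (of_real a * t)"]
      nn_integral_complex_gaussian_rescale[OF assms]
    by simp
  finally show ?thesis
    using assms by (simp add: ennreal_mult[symmetric] mult.commute)
qed

lemma (in prob_space) indep_var_of_distr_pair:
  fixes X :: "'a \<Rightarrow> 'b::euclidean_space" and Y :: "'a \<Rightarrow> 'c::euclidean_space"
    and f :: "'b \<Rightarrow> 'd::topological_space" and g :: "'c \<Rightarrow> 'd"
  assumes [measurable]: "X \<in> measurable M borel" "Y \<in> measurable M borel"
    "f \<in> borel_measurable borel" "g \<in> borel_measurable borel"
    and indep: "distr M (lborel \<Otimes>\<^sub>M lborel) (\<lambda>\<omega>. (X \<omega>, Y \<omega>)) = distr M lborel X \<Otimes>\<^sub>M distr M lborel Y"
  shows "indep_var borel (\<lambda>\<omega>. f (X \<omega>)) borel (\<lambda>\<omega>. g (Y \<omega>))"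
proof -
  have "sigma_finite_measure (distr (distr M lborel Y) borel g)"
    by (intro prob_space_imp_sigma_finite prob_space.prob_space_distr prob_space_distr) simp_all
  then have "distr (distr M lborel X) borel f \<Otimes>\<^sub>M distr (distr M lborel Y) borel g
      = distr (distr M lborel X \<Otimes>\<^sub>M distr M lborel Y) (borel \<Otimes>\<^sub>M borel) (\<lambda>(x, y). (f x, g y))"
    by (intro pair_measure_distr) simp_all
  then have "distr M borel (\<lambda>\<omega>. f (X \<omega>)) \<Otimes>\<^sub>M distr M borel (\<lambda>\<omega>. g (Y \<omega>))
      = distr (distr M lborel X \<Otimes>\<^sub>M distr M lborel Y) (borel \<Otimes>\<^sub>M borel) (\<lambda>(x, y). (f x, g y))"
    by (simp add: distr_distr comp_def)
  also have "\<dots> = distr M (borel \<Otimes>\<^sub>M borel) (\<lambda>\<omega>. (f (X \<omega>), g (Y \<omega>)))"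
    by (simp add: indep[symmetric] distr_distr comp_def)
  finally show ?thesis
    by (simp add: indep_var_distribution_eq)
qed

lemma (in prob_space) distributed_shear:
  fixes X :: "'a \<Rightarrow> 'b::euclidean_space" and Z :: "'a \<Rightarrow> 'c::euclidean_space"
    and \<phi> :: "'b \<Rightarrow> 'c"
  assumes XZ: "distributed M (lborel \<Otimes>\<^sub>M lborel) (\<lambda>\<omega>. (X \<omega>, Z \<omega>)) f"
    and [measurable]: "\<phi> \<in> borel_measurable borel"
  shows "distributed M (lborel \<Otimes>\<^sub>M lborel) (\<lambda>\<omega>. (\<phi> (X \<omega>) + Z \<omega>, X \<omega>))
    (\<lambda>(y, x). f (x, y - \<phi> x))"
proof -
  have [measurable]: "f \<in> borel_measurable (lborel \<Otimes>\<^sub>M lborel)"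
    and pair: "(\<lambda>\<omega>. (X \<omega>, Z \<omega>)) \<in> measurable M (lborel \<Otimes>\<^sub>M lborel)"
    using XZ by (auto simp: distributed_def)
  have [measurable]: "X \<in> measurable M borel" "Z \<in> measurable M borel"
    using measurable_compose[OF pair measurable_fst] measurable_compose[OF pair measurable_snd]
    by simp_all
  show ?thesis
    unfolding distributed_def
  proof (intro conjI measure_eqI)
    fix A assume "A \<in> sets (distr M (lborel \<Otimes>\<^sub>M lborel) (\<lambda>\<omega>. (\<phi> (X \<omega>) + Z \<omega>, X \<omega>)))"
    moreover have "sets (lborel \<Otimes>\<^sub>M lborel) = sets (borel \<Otimes>\<^sub>M borel :: ('c \<times> 'b) measure)"
      by (intro sets_pair_measure_cong) simp_all
    ultimately have [measurable]: "A \<in> sets (lborel \<Otimes>\<^sub>M lborel)" "A \<in> sets (borel \<Otimes>\<^sub>M borel)"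
      by simp_all
    have "emeasure (distr M (lborel \<Otimes>\<^sub>M lborel) (\<lambda>\<omega>. (\<phi> (X \<omega>) + Z \<omega>, X \<omega>))) A
        = (\<integral>\<^sup>+p. indicator A p \<partial>distr M (lborel \<Otimes>\<^sub>M lborel) (\<lambda>\<omega>. (\<phi> (X \<omega>) + Z \<omega>, X \<omega>)))"
      by (simp add: nn_integral_indicator)
    also have "\<dots> = (\<integral>\<^sup>+\<omega>. indicator A (\<phi> (X \<omega>) + Z \<omega>, X \<omega>) \<partial>M)"
      by (rule nn_integral_distr) measurable
    also have "\<dots> = (\<integral>\<^sup>+p. f p * indicator A (\<phi> (fst p) + snd p, fst p) \<partial>(lborel \<Otimes>\<^sub>M lborel))"
      by (subst distributed_nn_integral[OF XZ]) simp_all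
    also have "\<dots> = (\<integral>\<^sup>+x. \<integral>\<^sup>+z. f (x, z) * indicator A (\<phi> x + z, x) \<partial>lborel \<partial>lborel)"
      by (simp add: lborel.nn_integral_fst[symmetric])
    also have "\<dots> = (\<integral>\<^sup>+x. \<integral>\<^sup>+y. f (x, y - \<phi> x) * indicator A (y, x) \<partial>lborel \<partial>lborel)"
    proof (rule nn_integral_cong)
      fix x
      show "(\<integral>\<^sup>+z. f (x, z) * indicator A (\<phi> x + z, x) \<partial>lborel)
          = (\<integral>\<^sup>+y. f (x, y - \<phi> x) * indicator A (y, x) \<partial>lborel)"
        using nn_integral_lborel_translate[of "\<lambda>y. f (x, y - \<phi> x) * indicator A (y, x)" "\<phi> x"]
        by simp
    qed
    also have "\<dots> = (\<integral>\<^sup>+p. f (snd p, fst p - \<phi> (snd p)) * indicator A p \<partial>(lborel \<Otimes>\<^sub>M lborel))"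
      by (subst lborel_pair.nn_integral_snd[symmetric]) simp_all
    also have "\<dots> = emeasure (density (lborel \<Otimes>\<^sub>M lborel) (\<lambda>(y, x). f (x, y - \<phi> x))) A"
      by (simp add: emeasure_density split_beta')
    finally show "emeasure (distr M (lborel \<Otimes>\<^sub>M lborel) (\<lambda>\<omega>. (\<phi> (X \<omega>) + Z \<omega>, X \<omega>))) A
      = emeasure (density (lborel \<Otimes>\<^sub>M lborel) (\<lambda>(y, x). f (x, y - \<phi> x))) A" .
  qed simp_all
qed

section \<open>A scalar complex Gaussian channel\<close>

lemma borel_measurable_cnj[measurable]: "cnj \<in> borel_measurable borel"
  by (intro borel_measurable_continuous_onI continuous_intros)

text \<open>The noise \<open>z\<close> has density \<open>exp (- q x) / D\<close>; in the application \<open>q x = Re (x\<^sup>H B x)\<close>,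
  \<open>l x = c\<^sup>H B x\<close> and \<open>\<gamma> = c\<^sup>H B c\<close>, and the shift identities are all that is used of this.\<close>

locale gaussian_scalar_channel = prob_space +
  fixes \<beta> :: "'a \<Rightarrow> complex" and z :: "'a \<Rightarrow> complex^'k::finite" and c :: "complex^'k"
    and q :: "complex^'k \<Rightarrow> real" and l :: "complex^'k \<Rightarrow> complex" and \<alpha> \<gamma> D :: real
  assumes \<alpha>_pos: "0 < \<alpha>"
    and distributed_\<beta>: "distributed M lborel \<beta> (\<lambda>b. ennreal (cn1_density \<alpha> b))"
    and distributed_z: "distributed M lborel z (\<lambda>x. ennreal (exp (- q x) / D))"
    and indep_\<beta>_z: "distr M (lborel \<Otimes>\<^sub>M lborel) (\<lambda>\<omega>. (\<beta> \<omega>, z \<omega>))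
      = distr M lborel \<beta> \<Otimes>\<^sub>M distr M lborel z"
    and continuous_q: "continuous_on UNIV q" and continuous_l: "continuous_on UNIV l"
    and q_shift: "\<And>x b. q (x + b *s c) = q x + 2 * Re (cnj b * l x) + (cmod b)\<^sup>2 * \<gamma>"
    and l_shift: "\<And>x b. l (x + b *s c) = l x + b * \<gamma>"
begin

lemma measurable_channel[measurable]:
  "\<beta> \<in> borel_measurable M" "z \<in> borel_measurable M"
  "q \<in> borel_measurable borel" "l \<in> borel_measurable borel"
  using distributed_\<beta> distributed_z continuous_q continuous_l
  by (auto simp: distributed_def intro: borel_measurable_continuous_onI)

lemma D_pos: "0 < D"
  using distributed_scaled_density(1)[OF distributed_z] by simp

lemma cn1_density_pos: "0 < cn1_density \<alpha> b"
  using \<alpha>_pos by (simp add: cn1_density_def)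

lemma moments_\<beta>:
  "integrable M \<beta>" "expectation \<beta> = 0"
  "integrable M (\<lambda>\<omega>. (cmod (\<beta> \<omega>))\<^sup>2)" "expectation (\<lambda>\<omega>. (cmod (\<beta> \<omega>))\<^sup>2) = \<alpha>"
proof -
  have density: "distributed M lborel \<beta> (\<lambda>b. ennreal (exp (- ((cmod b)\<^sup>2 / \<alpha>)) / (pi * \<alpha>)))"
    using distributed_\<beta> by (simp add: cn1_density_def)
  have shift: "(cmod (x + s *\<^sub>R of_real \<alpha>))\<^sup>2 / \<alpha> = (cmod x)\<^sup>2 / \<alpha> + 2 * s * Re x + s\<^sup>2 * \<alpha>"
    "(cmod (x + s *\<^sub>R (\<i> * of_real \<alpha>)))\<^sup>2 / \<alpha> = (cmod x)\<^sup>2 / \<alpha> + 2 * s * Im x + s\<^sup>2 * \<alpha>"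
    for x s
    unfolding cmod_power2 using \<alpha>_pos by (simp_all add: field_simps power2_eq_square)
  have "(\<lambda>b. (cmod b)\<^sup>2 / \<alpha>) \<in> borel_measurable borel" "(\<lambda>b::complex. b) \<in> borel_measurable borel"
    by simp_all
  from complex_gaussian_moments[OF density this shift]
  show "integrable M \<beta>" "expectation \<beta> = 0"
    "integrable M (\<lambda>\<omega>. (cmod (\<beta> \<omega>))\<^sup>2)" "expectation (\<lambda>\<omega>. (cmod (\<beta> \<omega>))\<^sup>2) = \<alpha>"
    by simp_all
qed

lemma moments_l_z:
  "integrable M (\<lambda>\<omega>. l (z \<omega>))" "expectation (\<lambda>\<omega>. l (z \<omega>)) = 0"
  "integrable M (\<lambda>\<omega>. (cmod (l (z \<omega>)))\<^sup>2)" "expectation (\<lambda>\<omega>. (cmod (l (z \<omega>)))\<^sup>2) = \<gamma>"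
proof -
  have "s *\<^sub>R c = of_real s *s c" "s *\<^sub>R (\<i> *s c) = (\<i> * of_real s) *s c" for s
    unfolding vec_eq_iff by (simp_all add: scaleR_conv_of_real[where 'a = complex])
  then have "q (x + s *\<^sub>R c) = q x + 2 * s * Re (l x) + s\<^sup>2 * \<gamma>"
    "q (x + s *\<^sub>R (\<i> *s c)) = q x + 2 * s * Im (l x) + s\<^sup>2 * \<gamma>" for x s
    by (simp_all add: q_shift norm_mult)
  from complex_gaussian_moments[OF distributed_z _ _ this]
  show "integrable M (\<lambda>\<omega>. l (z \<omega>))" "expectation (\<lambda>\<omega>. l (z \<omega>)) = 0"
    "integrable M (\<lambda>\<omega>. (cmod (l (z \<omega>)))\<^sup>2)" "expectation (\<lambda>\<omega>. (cmod (l (z \<omega>)))\<^sup>2) = \<gamma>"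
    by simp_all
qed

lemma \<gamma>_nonneg: "0 \<le> \<gamma>"
  using integral_nonneg_AE[of "\<lambda>\<omega>. (cmod (l (z \<omega>)))\<^sup>2" M] moments_l_z(4) by simp

lemma one_add_\<alpha>_\<gamma>_pos: "0 < 1 + \<alpha> * \<gamma>"
  using \<alpha>_pos \<gamma>_nonneg by (simp add: add_pos_nonneg)

definition posterior_variance :: real
  where "posterior_variance = \<alpha> / (1 + \<alpha> * \<gamma>)"

definition joint_density :: "(complex^'k) \<times> complex \<Rightarrow> real"
  where "joint_density = (\<lambda>(y, b). exp (- q (y - b *s c)) / D * cn1_density \<alpha> b)"

definition output_density :: "complex^'k \<Rightarrow> real"
  where "output_density y
    = exp (- q y) / D * exp (posterior_variance * (cmod (l y))\<^sup>2) / (1 + \<alpha> * \<gamma>)"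

lemma posterior_variance_pos: "0 < posterior_variance"
  and inverse_posterior_variance: "inverse posterior_variance = \<gamma> + inverse \<alpha>"
  using \<alpha>_pos \<gamma>_nonneg by (auto simp: posterior_variance_def field_simps add_pos_nonneg)

lemma joint_density_pos: "0 < joint_density p"
  using D_pos cn1_density_pos by (auto simp: joint_density_def split: prod.split)

lemma output_density_pos: "0 < output_density y"
  using D_pos \<alpha>_pos \<gamma>_nonneg by (simp add: output_density_def add_pos_nonneg)

lemma q_diff: "q (y - b *s c) = q y - 2 * Re (cnj b * l y) + (cmod b)\<^sup>2 * \<gamma>"
proof -
  have "y - b *s c = y + (- b) *s c" by (simp add: vec_eq_iff)
  then show ?thesis using q_shift[of y "- b"] by simp
qed

lemma joint_distributed:
  "distributed M (lborel \<Otimes>\<^sub>M lborel) (\<lambda>\<omega>. (\<beta> \<omega> *s c + z \<omega>, \<beta> \<omega>)) (\<lambda>p. ennreal (joint_density p))"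
proof -
  have "(\<lambda>b. b *s c) \<in> borel_measurable borel"
    by (rule borel_measurable_continuous_onI)
      (simp add: vector_scalar_mult_def continuous_on_vec_lambda continuous_intros)
  from distributed_shear[OF distributed_joint_indep'[OF lborel.sigma_finite_measure_axioms
        lborel.sigma_finite_measure_axioms distributed_\<beta> distributed_z indep_\<beta>_z[symmetric]] this]
  show ?thesis
    using D_pos cn1_density_pos
    by (simp add: joint_density_def split_beta' ennreal_mult[symmetric] less_imp_le mult.commute)
qed

lemma joint_density_eq: "joint_density (y, b)
  = exp (- q y) / (D * (pi * \<alpha>)) * exp (2 * Re (cnj b * l y) - (cmod b)\<^sup>2 / posterior_variance)"
  unfolding joint_density_def cn1_density_def q_diff divide_inverse
  by (simp add: inverse_posterior_variance exp_add[symmetric] exp_diff algebra_simps)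

lemma nn_integral_exp_cmod_sq:
  "(\<integral>\<^sup>+b. ennreal (exp (- (cmod b)\<^sup>2 / \<alpha>)) \<partial>lborel) = ennreal (pi * \<alpha>)"
proof -
  have "(\<integral>\<^sup>+b. ennreal (exp (- (cmod b)\<^sup>2 / \<alpha>)) \<partial>lborel)
      = (\<integral>\<^sup>+b. ennreal (pi * \<alpha>) * ennreal (exp (- (cmod b)\<^sup>2 / \<alpha>) / (pi * \<alpha>)) \<partial>lborel)"
    using \<alpha>_pos by (intro nn_integral_cong) (simp add: ennreal_mult[symmetric])
  also have "\<dots> = ennreal (pi * \<alpha>)"
    using distributed_scaled_density(2)[OF distributed_\<beta>[unfolded cn1_density_def]]
    by (subst nn_integral_cmult) simp_all
  finally show ?thesis .
qed

lemma output_distributed: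
  "distributed M lborel (\<lambda>\<omega>. \<beta> \<omega> *s c + z \<omega>) (\<lambda>y. ennreal (output_density y))"
proof -
  have "(\<integral>\<^sup>+b. ennreal (joint_density (y, b)) \<partial>lborel) = ennreal (output_density y)" for y
  proof -
    let ?A = "exp (- q y) / (D * (pi * \<alpha>))" and ?\<kappa> = posterior_variance
    have "ennreal (joint_density (y, b))
        = ennreal ?A * ennreal (exp (2 * Re (cnj b * l y) - (cmod b)\<^sup>2 / ?\<kappa>))" for b
      unfolding joint_density_eq using D_pos \<alpha>_pos by (intro ennreal_mult) auto
    then have "(\<integral>\<^sup>+b. ennreal (joint_density (y, b)) \<partial>lborel)
        = ennreal ?A * (\<integral>\<^sup>+b. ennreal (exp (2 * Re (cnj b * l y) - (cmod b)\<^sup>2 / ?\<kappa>)) \<partial>lborel)"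
      by (simp only:) (rule nn_integral_cmult, measurable)
    also have "\<dots> = ennreal (?A * (pi * ?\<kappa> * exp (?\<kappa> * (cmod (l y))\<^sup>2)))"
      unfolding nn_integral_complex_gaussian_tilt[OF \<alpha>_pos posterior_variance_pos
          nn_integral_exp_cmod_sq]
      using D_pos \<alpha>_pos posterior_variance_pos by (intro ennreal_mult[symmetric]) auto
    also have "?A * (pi * ?\<kappa> * exp (?\<kappa> * (cmod (l y))\<^sup>2)) = output_density y"
      using D_pos \<alpha>_pos \<gamma>_nonneg
      by (simp add: output_density_def posterior_variance_def field_simps add_pos_nonneg)
    finally show ?thesis .
  qed
  then show ?thesis
    using distr_marginal1[OF lborel.sigma_finite_measure_axioms lborel.sigma_finite_measure_axioms
        joint_distributed] by simp
qed

definition information_density :: "(complex^'k) \<times> complex \<Rightarrow> real"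
  where "information_density p
    = log 2 (joint_density p / (output_density (fst p) * cn1_density \<alpha> (snd p)))"

lemma information_density_eq: "information_density (y, b) = log 2 (1 + \<alpha> * \<gamma>)
  + (2 * Re (cnj b * l y) - (cmod b)\<^sup>2 * \<gamma> - posterior_variance * (cmod (l y))\<^sup>2) / ln 2"
proof -
  define E where "E = 2 * Re (cnj b * l y) - (cmod b)\<^sup>2 * \<gamma>"
  have "joint_density (y, b) / (output_density y * cn1_density \<alpha> b)
      = (1 + \<alpha> * \<gamma>) * exp (E - posterior_variance * (cmod (l y))\<^sup>2)"
    using D_pos cn1_density_pos[of b] \<alpha>_pos \<gamma>_nonneg
    by (simp add: joint_density_def output_density_def q_diff E_def exp_diff exp_add[symmetric]
        field_simps add_pos_nonneg)
  then show ?thesis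
    using one_add_\<alpha>_\<gamma>_pos
    by (simp add: information_density_def log_def E_def ln_mult add_divide_distrib)
qed

lemma borel_measurable_information_density[measurable]:
  "information_density \<in> borel_measurable (lborel \<Otimes>\<^sub>M lborel)"
proof -
  have "information_density = (\<lambda>p. log 2 (1 + \<alpha> * \<gamma>) + (2 * Re (cnj (snd p) * l (fst p))
      - (cmod (snd p))\<^sup>2 * \<gamma> - posterior_variance * (cmod (l (fst p)))\<^sup>2) / ln 2)"
    by (simp add: fun_eq_iff information_density_eq split_beta')
  then show ?thesis by simp
qed

lemma has_bochner_integral_cross_term:
  "has_bochner_integral M (\<lambda>\<omega>. cnj (\<beta> \<omega>) * l (z \<omega>)) 0"
proof -
  have indep: "indep_var borel (\<lambda>\<omega>. cnj (\<beta> \<omega>)) borel (\<lambda>\<omega>. l (z \<omega>))"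
    by (rule indep_var_of_distr_pair[OF _ _ _ _ indep_\<beta>_z]) simp_all
  have "integrable M (\<lambda>\<omega>. cnj (\<beta> \<omega>))"
    using moments_\<beta>(1) by simp
  from indep_var_lebesgue_integral[OF indep this moments_l_z(1)]
    indep_var_integrable[OF indep this moments_l_z(1)]
  show ?thesis
    using moments_\<beta>(2) moments_l_z(2) by (simp add: has_bochner_integral_iff)
qed

lemma information_density_output:
  "information_density (\<beta> \<omega> *s c + z \<omega>, \<beta> \<omega>) = log 2 (1 + \<alpha> * \<gamma>)
    + ((2 - 2 * posterior_variance * \<gamma>) * Re (cnj (\<beta> \<omega>) * l (z \<omega>))
      + (\<gamma> - posterior_variance * \<gamma>\<^sup>2) * (cmod (\<beta> \<omega>))\<^sup>2
      - posterior_variance * (cmod (l (z \<omega>)))\<^sup>2) / ln 2"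
proof -
  have "l (\<beta> \<omega> *s c + z \<omega>) = l (z \<omega>) + \<beta> \<omega> * \<gamma>"
    using l_shift[of "z \<omega>" "\<beta> \<omega>"] by (simp add: add.commute)
  then show ?thesis
    unfolding information_density_eq cmod_power2 by (simp add: field_simps power2_eq_square)
qed

lemma expectation_information_density:
  "expectation (\<lambda>\<omega>. information_density (\<beta> \<omega> *s c + z \<omega>, \<beta> \<omega>)) = log 2 (1 + \<alpha> * \<gamma>)"
proof -
  let ?\<kappa> = posterior_variance
  from has_bochner_integral_Re[OF has_bochner_integral_cross_term]
  have "has_bochner_integral M (\<lambda>\<omega>. information_density (\<beta> \<omega> *s c + z \<omega>, \<beta> \<omega>))
    (log 2 (1 + \<alpha> * \<gamma>) + ((2 - 2 * ?\<kappa> * \<gamma>) * 0 + (\<gamma> - ?\<kappa> * \<gamma>\<^sup>2) * \<alpha> - ?\<kappa> * \<gamma>) / ln 2)"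
    unfolding information_density_output using moments_\<beta> moments_l_z
    by (intro has_bochner_integral_add has_bochner_integral_diff has_bochner_integral_divide_zero
        has_bochner_integral_mult_right)
      (simp_all add: has_bochner_integral_iff prob_space)
  moreover have "(\<gamma> - ?\<kappa> * \<gamma>\<^sup>2) * \<alpha> - ?\<kappa> * \<gamma> = 0"
    using one_add_\<alpha>_\<gamma>_pos by (simp add: posterior_variance_def field_simps power2_eq_square)
  ultimately show ?thesis
    by (simp add: has_bochner_integral_iff)
qed

theorem mutual_information_eq:
  "mutual_information 2 lborel lborel (\<lambda>\<omega>. \<beta> \<omega> *s c + z \<omega>) \<beta> = log 2 (1 + \<alpha> * \<gamma>)"
proof -
  interpret information_space M 2 by standard simp
  have "mutual_information 2 lborel lborel (\<lambda>\<omega>. \<beta> \<omega> *s c + z \<omega>) \<beta>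
      = (\<integral>p. joint_density p * information_density p \<partial>(lborel \<Otimes>\<^sub>M lborel))"
    unfolding information_density_def split_beta'
    by (rule mutual_information_distr[OF lborel.sigma_finite_measure_axioms
          lborel.sigma_finite_measure_axioms output_distributed _ distributed_\<beta> _
          joint_distributed])
      (auto intro: less_imp_le output_density_pos cn1_density_pos joint_density_pos)
  also have "\<dots> = expectation (\<lambda>\<omega>. information_density (\<beta> \<omega> *s c + z \<omega>, \<beta> \<omega>))"
    by (rule distributed_integral[OF joint_distributed])
      (simp_all add: less_imp_le joint_density_pos)
  finally show ?thesis
    by (simp add: expectation_information_density)
qed

end

section \<open>Hermitian forms and Kronecker products\<close>

definition sesq_form :: "complex^'m \<Rightarrow> complex^'m^'m \<Rightarrow> complex^'m \<Rightarrow> complex" where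
  "sesq_form y A x = (\<Sum>i\<in>UNIV. \<Sum>j\<in>UNIV. cnj (y$i) * A$i$j * x$j)"

definition hermitian_mat :: "complex^'m^'m \<Rightarrow> bool" where
  "hermitian_mat A \<longleftrightarrow> (\<forall>i j. cnj (A$j$i) = A$i$j)"

lemma herm_form_eq_sesq_form: "herm_form x A = sesq_form x A x"
  by (simp add: herm_form_def sesq_form_def)

lemma sesq_form_add_left: "sesq_form (x + y) A z = sesq_form x A z + sesq_form y A z"
  by (simp add: sesq_form_def sum.distrib[symmetric] algebra_simps)

lemma sesq_form_add_right: "sesq_form y A (x + z) = sesq_form y A x + sesq_form y A z"
  by (simp add: sesq_form_def sum.distrib[symmetric] algebra_simps)

lemma sesq_form_scale_left: "sesq_form (b *s y) A x = cnj b * sesq_form y A x"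
  by (simp add: sesq_form_def sum_distrib_left algebra_simps)

lemma sesq_form_scale_right: "sesq_form y A (b *s x) = b * sesq_form y A x"
  by (simp add: sesq_form_def sum_distrib_left algebra_simps)

lemma sesq_form_swap:
  assumes "hermitian_mat A"
  shows "sesq_form x A y = cnj (sesq_form y A x)"
proof -
  have "cnj (sesq_form y A x) = (\<Sum>i\<in>UNIV. \<Sum>j\<in>UNIV. y$i * cnj (A$i$j) * cnj (x$j))"
    by (simp add: sesq_form_def cnj_sum)
  also have "\<dots> = (\<Sum>j\<in>UNIV. \<Sum>i\<in>UNIV. y$i * cnj (A$i$j) * cnj (x$j))"
    by (rule sum.swap)
  also have "\<dots> = sesq_form x A y"
    using assms unfolding hermitian_mat_def sesq_form_def
    by (intro sum.cong refl) (simp add: algebra_simps)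
  finally show ?thesis ..
qed

lemma herm_form_real:
  assumes "hermitian_mat A"
  shows "herm_form x A = of_real (Re (herm_form x A))"
  using sesq_form_swap[OF assms, of x x] unfolding herm_form_eq_sesq_form
  by (metis Reals_cnj_iff complex_is_Real_iff of_real_Re)

lemma herm_form_shift:
  assumes "hermitian_mat A"
  shows "Re (herm_form (x + b *s c) A)
    = Re (herm_form x A) + 2 * Re (cnj b * sesq_form c A x) + (cmod b)\<^sup>2 * Re (herm_form c A)"
proof -
  have "herm_form (x + b *s c) A
      = herm_form x A + b * cnj (sesq_form c A x) + cnj b * sesq_form c A x
        + cnj b * b * herm_form c A"
    unfolding herm_form_eq_sesq_form
    by (simp add: sesq_form_swap[OF assms, of x c] sesq_form_add_left sesq_form_add_right
        sesq_form_scale_left sesq_form_scale_right algebra_simps)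
  moreover have "Re (cnj b * b * herm_form c A) = (cmod b)\<^sup>2 * Re (herm_form c A)"
    by (subst herm_form_real[OF assms]) (simp add: complex_norm_square[symmetric] mult.commute)
  ultimately show ?thesis by simp
qed

lemma sesq_form_shift:
  assumes "hermitian_mat A"
  shows "sesq_form c A (x + b *s c) = sesq_form c A x + b * Re (herm_form c A)"
  using herm_form_real[OF assms, of c]
  by (simp add: sesq_form_add_right sesq_form_scale_right herm_form_eq_sesq_form)

lemma continuous_on_herm_form: "continuous_on UNIV (\<lambda>x. Re (herm_form x A))"
  unfolding herm_form_def by (intro continuous_intros)

lemma continuous_on_sesq_form: "continuous_on UNIV (sesq_form y A)"
  unfolding sesq_form_def by (intro continuous_intros)

lemma norm_vec_power2: "(norm (x :: complex^'n))\<^sup>2 = (\<Sum>i\<in>UNIV. (cmod (x$i))\<^sup>2)"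
  by (simp add: power2_norm_eq_inner inner_vec_def)

lemma sum_cnj_mult_self: "(\<Sum>i\<in>UNIV. cnj (x$i) * x$i) = of_real ((norm (x :: complex^'n))\<^sup>2)"
  unfolding norm_vec_power2 of_real_sum
  by (intro sum.cong refl) (simp add: complex_norm_square mult.commute del: of_real_power)

lemma matrix_inv_eqI:
  fixes S B :: "'a::field^'m::finite^'m"
  assumes "S ** B = mat 1"
  shows "matrix_inv S = B"
  unfolding matrix_inv_def
proof (rule some_equality)
  show "S ** B = mat 1 \<and> B ** S = mat 1"
    using assms matrix_left_right_inverse1 by blast
  show "A = B" if "S ** A = mat 1 \<and> A ** S = mat 1" for A
    by (metis assms that matrix_mul_assoc matrix_mul_lid)
qed

lemma outerH_mult:
  "outerH a b ** outerH u v = outerH ((\<Sum>k\<in>UNIV. cnj (b$k) * u$k) *s a) v"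
  by (simp add: vec_eq_iff outerH_def matrix_matrix_mult_def sum_distrib_left sum_distrib_right
      algebra_simps)

lemma matrix_diff_ldistrib: "(A::'a::ring_1^'n^'m) ** (B - C) = A ** B - A ** C"
  by (simp add: vec_eq_iff matrix_matrix_mult_def sum_subtractf right_diff_distrib)

lemma matrix_add_rdistrib: "((A::'a::semiring_1^'n^'m) + B) ** C = A ** C + B ** C"
  by (simp add: vec_eq_iff matrix_matrix_mult_def sum.distrib distrib_right)

lemma mat_1_add_outerH_inverse:
  fixes u v :: "complex^'n::finite"
  defines "s \<equiv> \<Sum>k\<in>UNIV. cnj (v$k) * u$k"
  assumes "1 + s \<noteq> 0"
  shows "(mat 1 + outerH u v) ** (mat 1 - outerH ((1 / (1 + s)) *s u) v) = mat 1"
proof -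
  have "(\<Sum>k\<in>UNIV. cnj (v$k) * ((1 / (1 + s)) *s u)$k) = s / (1 + s)"
    by (simp add: s_def sum_divide_distrib)
  then have "(mat 1 + outerH u v) ** (mat 1 - outerH ((1 / (1 + s)) *s u) v)
      = mat 1 + outerH ((1 - 1 / (1 + s) - s / (1 + s)) *s u) v"
    by (simp add: matrix_diff_ldistrib matrix_add_rdistrib outerH_mult)
      (simp add: vec_eq_iff outerH_def algebra_simps)
  also have "1 - 1 / (1 + s) - s / (1 + s) = 0"
    using assms(2) by (simp add: field_simps)
  finally show ?thesis
    by (simp add: vec_eq_iff outerH_def)
qed

lemma sum_UNIV_prod:
  "(\<Sum>r\<in>UNIV. f r) = (\<Sum>r1\<in>UNIV. \<Sum>r2\<in>UNIV. f (r1, r2))"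
  for f :: "'a::finite \<times> 'b::finite \<Rightarrow> 'c::comm_monoid_add"
  by (simp add: sum.cartesian_product UNIV_Times_UNIV[symmetric] del: UNIV_Times_UNIV)

lemma kron_eye_mult:
  fixes A B :: "complex^'n::finite^'n"
  shows "(kron_eye A :: complex^('l::finite \<times> 'n)^('l \<times> 'n)) ** kron_eye B = kron_eye (A ** B)"
proof -
  have "(kron_eye A ** kron_eye B :: complex^('l \<times> 'n)^('l \<times> 'n)) $ p $ q
      = (\<Sum>r1\<in>UNIV. \<Sum>r2\<in>UNIV.
          (if fst p = r1 then A$(snd p)$r2 else 0) * (if r1 = fst q then B$r2$(snd q) else 0))"
    for p q
    unfolding matrix_matrix_mult_def kron_eye_def
    by (subst sum_UNIV_prod) (simp only: snd_conv fst_conv vec_lambda_beta)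
  also have "\<dots> p q = (\<Sum>r1\<in>UNIV.
      if r1 = fst p then (if r1 = fst q then (A ** B)$(snd p)$(snd q) else 0) else 0)"
    for p q
    by (intro sum.cong refl) (auto simp: matrix_matrix_mult_def)
  finally show ?thesis
    by (simp add: vec_eq_iff kron_eye_def)
qed

lemma kron_eye_mat_1:
  "(kron_eye (mat 1 :: complex^'n::finite^'n) :: complex^('l::finite \<times> 'n)^('l \<times> 'n)) = mat 1"
  by (simp add: vec_eq_iff kron_eye_def mat_def prod_eq_iff)

lemma hermitian_kron_eye:
  "hermitian_mat A \<Longrightarrow> hermitian_mat (kron_eye A :: complex^('l::finite \<times> 'n::finite)^('l \<times> 'n))"
  by (auto simp: hermitian_mat_def kron_eye_def)

lemma hermitian_mat_1_diff_outerH: "hermitian_mat (mat 1 - outerH (of_real r *s h) h)"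
  by (auto simp: hermitian_mat_def mat_def outerH_def)

lemma herm_form_diff: "herm_form x (A - B) = herm_form x A - herm_form x B"
  by (simp add: herm_form_def sum_subtractf algebra_simps)

lemma herm_form_mat_1: "herm_form x (mat 1) = of_real ((norm x)\<^sup>2)"
  by (simp add: herm_form_def mat_def if_distrib if_distribR sum_cnj_mult_self cong: if_cong)

lemma herm_form_outerH:
  "herm_form x (outerH a b) = (\<Sum>i\<in>UNIV. cnj (x$i) * a$i) * cnj (\<Sum>j\<in>UNIV. cnj (x$j) * b$j)"
  by (simp add: herm_form_def outerH_def sum_product cnj_sum algebra_simps)

lemma herm_form_kron_eye:
  fixes u :: "complex^'l::finite" and v :: "complex^'n::finite" and A :: "complex^'n^'n"
  shows "herm_form ((\<chi> p. u$(fst p) * v$(snd p)) :: complex^('l \<times> 'n)) (kron_eye A)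
    = of_real ((norm u)\<^sup>2) * herm_form v A"
proof -
  have "herm_form ((\<chi> p. u$(fst p) * v$(snd p)) :: complex^('l \<times> 'n)) (kron_eye A)
      = (\<Sum>p1\<in>UNIV. \<Sum>p2\<in>UNIV. \<Sum>q1\<in>UNIV. \<Sum>q2\<in>UNIV.
          cnj (u$p1 * v$p2) * (if p1 = q1 then A$p2$q2 else 0) * (u$q1 * v$q2))"
    unfolding herm_form_def kron_eye_def
    by (subst (1 2) sum_UNIV_prod) (simp only: snd_conv fst_conv vec_lambda_beta)
  also have "\<dots> = (\<Sum>p1\<in>UNIV. \<Sum>p2\<in>UNIV. \<Sum>q1\<in>UNIV.
      if q1 = p1 then (\<Sum>q2\<in>UNIV. cnj (u$p1 * v$p2) * A$p2$q2 * (u$q1 * v$q2)) else 0)"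
    by (intro sum.cong refl) auto
  also have "\<dots> = (\<Sum>p1\<in>UNIV. cnj (u$p1) * u$p1 * herm_form v A)"
    by (simp add: herm_form_def sum_distrib_left algebra_simps)
  finally show ?thesis
    by (simp add: sum_distrib_right[symmetric] sum_cnj_mult_self)
qed

lemma cvec_outerH: "cvec (outerH a b) = (\<chi> p. cnj (b$(fst p)) * a$(snd p))"
  by (simp add: vec_eq_iff cvec_def outerH_def mult.commute)

lemma herm_form_scale: "herm_form (a *s x) A = of_real ((cmod a)\<^sup>2) * herm_form x A"
  unfolding complex_norm_square by (simp add: herm_form_def sum_distrib_left algebra_simps)

lemma herm_form_cvec_outerH:
  "herm_form (cvec (outerH v s)) (kron_eye A) = of_real ((norm s)\<^sup>2) * herm_form v A"
proof -
  have "(norm (\<chi> l. cnj (s$l)))\<^sup>2 = (norm s)\<^sup>2"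
    by (simp add: norm_vec_power2)
  then show ?thesis
    using herm_form_kron_eye[of "\<chi> l. cnj (s$l)" v A] by (simp add: cvec_outerH)
qed

lemma herm_form_mat_1_diff_outerH:
  "herm_form v (mat 1 - outerH (of_real k *s h) h)
    = of_real ((norm v)\<^sup>2 - k * (cmod (\<Sum>i\<in>UNIV. cnj (v$i) * h$i))\<^sup>2)"
proof -
  have "(\<Sum>i\<in>UNIV. cnj (v$i) * (of_real k *s h)$i) = of_real k * (\<Sum>i\<in>UNIV. cnj (v$i) * h$i)"
    by (simp add: sum_distrib_left algebra_simps)
  then show ?thesis
    by (simp add: herm_form_diff herm_form_mat_1 herm_form_outerH mult.assoc complex_norm_square
        del: of_real_power)
qed

lemma matched_filter_gain:
  assumes "h \<noteq> 0"
  shows "(\<chi> i. h$i * (\<Sum>k\<in>UNIV. h$k * (\<chi> i. cnj (h$i) / of_real (norm h))$k))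
    = of_real (norm h) *s (h :: complex^'n)"
proof -
  have "(\<Sum>k\<in>UNIV. h$k * (cnj (h$k) / of_real (norm h))) = of_real (norm h)"
    using assms
    by (simp add: sum_divide_distrib[symmetric] mult.commute[of "h$_"] sum_cnj_mult_self
        power2_eq_square)
  then show ?thesis
    by (simp add: vec_eq_iff mult.commute)
qed

lemma matrix_inv_kron_eye_rank_one_update:
  fixes h :: "complex^'n::finite"
  assumes "0 < p"
  shows "matrix_inv (kron_eye ((\<chi> i i'. complex_of_real p * h$i * cnj (h$i')) + mat 1)
      :: complex^('l::finite \<times> 'n)^('l \<times> 'n))
    = kron_eye (mat 1 - outerH (of_real (p / (1 + p * (norm h)\<^sup>2)) *s h) h)"
proof -
  have "(\<Sum>k\<in>UNIV. cnj (h$k) * (of_real p *s h)$k) = of_real p * (\<Sum>k\<in>UNIV. cnj (h$k) * h$k)"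
    by (simp add: sum_distrib_left algebra_simps)
  also have "\<dots> = of_real (p * (norm h)\<^sup>2)"
    by (simp add: sum_cnj_mult_self)
  finally have "(\<Sum>k\<in>UNIV. cnj (h$k) * (of_real p *s h)$k) = of_real (p * (norm h)\<^sup>2)" .
  moreover have "1 + of_real p * (of_real (norm h))\<^sup>2 \<noteq> (0 :: complex)"
  proof -
    have "0 < 1 + p * (norm h)\<^sup>2"
      using assms by (simp add: add_pos_nonneg)
    then have "complex_of_real (1 + p * (norm h)\<^sup>2) \<noteq> 0"
      by (simp only: of_real_eq_0_iff)
    then show ?thesis by simp
  qed
  ultimately have inverse: "(mat 1 + outerH (of_real p *s h) h)
      ** (mat 1 - outerH (of_real (p / (1 + p * (norm h)\<^sup>2)) *s h) h) = mat 1"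
    using mat_1_add_outerH_inverse[of h "of_real p *s h"] by simp
  have "(\<chi> i i'. complex_of_real p * h$i * cnj (h$i')) + mat 1 = mat 1 + outerH (of_real p *s h) h"
    by (simp add: vec_eq_iff outerH_def)
  then show ?thesis
    by (intro matrix_inv_eqI) (simp only: kron_eye_mult inverse kron_eye_mat_1)
qed

lemma herm_form_rank_one_echo:
  assumes "0 \<le> ps"
  shows "Re (herm_form (of_real (sqrt ps) *s cvec (outerH (of_real (norm hs) *s hs) ss))
      (kron_eye (mat 1 - outerH (of_real k *s hc) hc)))
    = ps * (norm ss)\<^sup>2 * (norm hs)\<^sup>2 * ((norm hs)\<^sup>2 - k * (cmod (\<Sum>i\<in>UNIV. cnj (hs$i) * hc$i))\<^sup>2)"
  unfolding herm_form_scale herm_form_cvec_outerH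
  unfolding herm_form_mat_1_diff_outerH
  using assms by simp

theorem theorem7:
  fixes M :: "'w measure"
    and pc ps \<alpha>s :: real
    and hc hs :: "complex^'n::finite"
    and ss :: "complex^'l::finite"
    and \<beta> :: "'w \<Rightarrow> complex"
    and zc :: "'w \<Rightarrow> complex^('l \<times> 'n)"
  assumes "pc > 0" and "ps > 0" and "\<alpha>s > 0"
    and "hs \<noteq> 0"
    and "(norm ss)^2 / real CARD('l) = 1"
    and "prob_space M"
    and "distributed M lborel \<beta> (\<lambda>x. ennreal (cn1_density \<alpha>s x))"
    and "distributed M lborel zc
           (\<lambda>x. ennreal (cn_density
              (kron_eye ((\<chi> i i'. complex_of_real pc * hc$i * cnj (hc$i'))
                          + mat 1 :: complex^'n^'n)) x))"
    and "distr M (lborel \<Otimes>\<^sub>M lborel) (\<lambda>\<omega>. (\<beta> \<omega>, zc \<omega>))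
           = distr M lborel \<beta> \<Otimes>\<^sub>M distr M lborel zc"
  shows "let w = (\<chi> i. cnj (hs$i) / complex_of_real (norm hs));
             G = outerH ((\<chi> i. hs$i * (\<Sum>k\<in>UNIV. hs$k * w$k)) :: complex^'n) ss;
             Y = (\<lambda>\<omega>. (complex_of_real (sqrt ps) * \<beta> \<omega>) *s cvec G + zc \<omega>)
         in prob_space.mutual_information M 2 lborel lborel Y \<beta> / real CARD('l)
            = log 2 (1 + ps * real CARD('l) * \<alpha>s * (norm hs)^2 *
                ((norm hs)^2 - pc * (cmod (\<Sum>i\<in>UNIV. cnj (hs$i) * hc$i))^2
                                / (1 + pc * (norm hc)^2))) / real CARD('l)"
proof -
  define \<kappa> where "\<kappa> = pc / (1 + pc * (norm hc)\<^sup>2)"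
  define B where
    "B = (kron_eye (mat 1 - outerH (of_real \<kappa> *s hc) hc) :: complex^('l \<times> 'n)^('l \<times> 'n))"
  define c where "c = of_real (sqrt ps) *s cvec (outerH (of_real (norm hs) *s hs) ss)"
  have "hermitian_mat B"
    unfolding B_def by (intro hermitian_kron_eye hermitian_mat_1_diff_outerH)
  note inverse = matrix_inv_kron_eye_rank_one_update[where 'l = 'l, OF \<open>pc > 0\<close>, of hc,
      folded \<kappa>_def, folded B_def]
  interpret gaussian_scalar_channel M \<beta> zc c "\<lambda>x. Re (herm_form x B)" "sesq_form c B" \<alpha>s
    "Re (herm_form c B)"
    "pi ^ CARD('l \<times> 'n) * Re (det (kron_eye ((\<chi> i i'. complex_of_real pc * hc$i * cnj (hc$i'))
      + mat 1 :: complex^'n^'n) :: complex^('l \<times> 'n)^('l \<times> 'n)))"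
    by (rule gaussian_scalar_channel.intro[OF assms(6) gaussian_scalar_channel_axioms.intro[OF
          assms(3,7) assms(8)[unfolded cn_density_def inverse] assms(9)
          continuous_on_herm_form continuous_on_sesq_form
          herm_form_shift[OF \<open>hermitian_mat B\<close>] sesq_form_shift[OF \<open>hermitian_mat B\<close>]]])
  have "1 + \<alpha>s * Re (herm_form c B) = 1 + ps * real CARD('l) * \<alpha>s * (norm hs)^2 *
      ((norm hs)^2 - pc * (cmod (\<Sum>i\<in>UNIV. cnj (hs$i) * hc$i))^2 / (1 + pc * (norm hc)^2))"
    using herm_form_rank_one_echo[of ps hs ss \<kappa> hc] \<open>ps > 0\<close> assms(5)
    by (simp add: c_def B_def \<kappa>_def)
  moreover have "(\<lambda>\<omega>. (of_real (sqrt ps) * \<beta> \<omega>) *s cvec (outerH (of_real (norm hs) *s hs) ss)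
      + zc \<omega>) = (\<lambda>\<omega>. \<beta> \<omega> *s c + zc \<omega>)"
    by (simp add: c_def fun_eq_iff vec_eq_iff algebra_simps)
  ultimately show ?thesis
    unfolding Let_def matched_filter_gain[OF \<open>hs \<noteq> 0\<close>] by (simp only: mutual_information_eq)
qed

end
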